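(* Let $A$ be a finite nonempty subset of $\mathbb{R}^n$ not containing the origin $O$. Let $A^{\mathcal B} = \{\tau(S) : S \subset A,\ S \neq \varnothing\}$ and let $A^{\mathcal W} = \{\tau(S) : S \subset A,\ S \neq \varnothing,\ S \text{ affinely independent}\}$. Then $A^{\mathcal B} = A^{\mathcal W}$.
   Context: For a finite nonempty set $S \subset \mathbb{R}^n$, $\mathcal{C}(S)$ denotes its convex hull and $\tau(S)$ denotes the unique point of $\mathcal{C}(S)$ of minimal Euclidean norm, i.e. $\|\tau(S)\| = \inf_{x \in \mathcal{C}(S)} \|x\|$. *)

theory Defs
  imports "HOL-Analysis.Analysis"
begin

definition tau :: "'a::euclidean_space set \<Rightarrow> 'a" where
  "tau S = (THE x. x \<in> convex hull S \<and> (\<forall>y \<in> convex hull S. norm x \<le> norm y))"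

end

theory Submission
  imports Defs
begin

(* By Caratheodory's theorem, applied to a subset of S of minimal cardinality, the point tau S
   lies in the convex hull of an affinely independent subset T of S.  As the hull of T is
   contained in the hull of S, tau S is also the point of minimal norm of the hull of T,
   i.e. tau S = tau T. *)

lemma tau_eq_closest_point:
  fixes S :: "'a::euclidean_space set"
  assumes "compact S" "S \<noteq> {}"
  shows "tau S = closest_point (convex hull S) 0"
proof -
  have closed: "closed (convex hull S)"
    by (simp add: assms compact_convex_hull compact_imp_closed)
  show ?thesis
    unfolding tau_def
  proof (rule the_equality)
    show "closest_point (convex hull S) 0 \<in> convex hull S \<and>
        (\<forall>y \<in> convex hull S. norm (closest_point (convex hull S) 0) \<le> norm y)"
      using closest_point_in_set[OF closed] closest_point_le[OF closed, of _ 0] assms(2)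
      by simp
  next
    fix x
    assume "x \<in> convex hull S \<and> (\<forall>y \<in> convex hull S. norm x \<le> norm y)"
    then show "x = closest_point (convex hull S) 0"
      using closest_point_unique[OF convex_convex_hull closed, of x 0]
      by (simp add: dist_0_norm)
  qed
qed

lemma tau_in_convex_hull:
  fixes S :: "'a::euclidean_space set"
  assumes "compact S" "S \<noteq> {}"
  shows "tau S \<in> convex hull S"
  using assms by (simp add: tau_eq_closest_point closest_point_in_set
      compact_convex_hull compact_imp_closed)

lemma norm_tau_le:
  fixes S :: "'a::euclidean_space set"
  assumes "compact S" "y \<in> convex hull S"
  shows "norm (tau S) \<le> norm y"
proof -
  have "S \<noteq> {}"
    using assms(2) by auto
  moreover have "closed (convex hull S)"
    using assms(1) compact_convex_hull compact_imp_closed by blast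
  ultimately show ?thesis
    using closest_point_le[OF _ assms(2), of 0] tau_eq_closest_point[OF assms(1)]
    by (simp add: dist_0_norm)
qed

lemma tau_unique:
  fixes S :: "'a::euclidean_space set"
  assumes "compact S" "x \<in> convex hull S" "\<And>y. y \<in> convex hull S \<Longrightarrow> norm x \<le> norm y"
  shows "tau S = x"
proof -
  have "S \<noteq> {}"
    using assms(2) by auto
  moreover have "closed (convex hull S)"
    using assms(1) compact_convex_hull compact_imp_closed by blast
  ultimately show ?thesis
    using closest_point_unique[OF convex_convex_hull _ assms(2), of 0] assms(3)
      tau_eq_closest_point[OF assms(1)]
    by (simp add: dist_0_norm)
qed

lemma tau_subset_eq:
  fixes S T :: "'a::euclidean_space set"
  assumes "compact S" "compact T" "T \<subseteq> S" "tau S \<in> convex hull T"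
  shows "tau T = tau S"
proof (rule tau_unique[OF \<open>compact T\<close> \<open>tau S \<in> convex hull T\<close>])
  fix y
  assume "y \<in> convex hull T"
  then have "y \<in> convex hull S"
    using hull_mono[OF \<open>T \<subseteq> S\<close>] by blast
  then show "norm (tau S) \<le> norm y"
    using norm_tau_le[OF \<open>compact S\<close>] by blast
qed

lemma in_convex_hull_affine_independent_subset:
  fixes S :: "'a::euclidean_space set"
  assumes "x \<in> convex hull S"
  obtains T where "finite T" "T \<subseteq> S" "\<not> affine_dependent T" "x \<in> convex hull T"
proof -
  let ?P = "\<lambda>n. \<exists>T. finite T \<and> T \<subseteq> S \<and> card T = n \<and> x \<in> convex hull T"
  obtain T0 where "finite T0" "T0 \<subseteq> S" "x \<in> convex hull T0"
    using assms caratheodory_aff_dim[of S] by blast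
  then have "?P (card T0)"
    by blast
  then have "?P (LEAST n. ?P n)"
    by (rule LeastI)
  then obtain T where T: "finite T" "T \<subseteq> S" "x \<in> convex hull T"
    and card_T: "card T = (LEAST n. ?P n)"
    by blast
  have minimal: "card T \<le> m" if "?P m" for m
    unfolding card_T using that by (rule Least_le)
  obtain T' where T': "finite T'" "T' \<subseteq> T" "card T' \<le> aff_dim T + 1" "x \<in> convex hull T'"
    using T(3) caratheodory_aff_dim[of T] by blast
  have "T' \<subseteq> S"
    using T'(2) T(2) by (rule order_trans)
  then have "card T \<le> card T'"
    using minimal T'(1,4) by blast
  then have "aff_dim T = int (card T) - 1"
    using T'(3) aff_dim_le_card[OF T(1)] by linarith
  then have "\<not> affine_dependent T"
    using affine_independent_iff_card T(1) by blast
  with T that show ?thesis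
    by blast
qed

theorem lemma1:
  fixes A :: "'a::euclidean_space set"
  assumes "finite A" and "A \<noteq> {}" and "0 \<notin> A"
  shows "{tau S | S. S \<subseteq> A \<and> S \<noteq> {}}
       = {tau S | S. S \<subseteq> A \<and> S \<noteq> {} \<and> \<not> affine_dependent S}"
proof (rule subset_antisym; rule subsetI)
  fix z
  assume "z \<in> {tau S | S. S \<subseteq> A \<and> S \<noteq> {}}"
  then obtain S where S: "S \<subseteq> A" "S \<noteq> {}" "z = tau S"
    by blast
  have "compact S"
    using finite_imp_compact finite_subset[OF S(1) \<open>finite A\<close>] by blast
  then have "z \<in> convex hull S"
    using tau_in_convex_hull S(2,3) by blast
  then obtain T where T: "finite T" "T \<subseteq> S" "\<not> affine_dependent T" "z \<in> convex hull T"
    by (rule in_convex_hull_affine_independent_subset)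
  have "tau T = z"
    using tau_subset_eq[OF \<open>compact S\<close> finite_imp_compact[OF T(1)] T(2)] T(4) S(3) by blast
  moreover have "T \<noteq> {}"
    using T(4) by auto
  ultimately show "z \<in> {tau S | S. S \<subseteq> A \<and> S \<noteq> {} \<and> \<not> affine_dependent S}"
    using T(2,3) S(1) by blast
next
  fix z
  assume "z \<in> {tau S | S. S \<subseteq> A \<and> S \<noteq> {} \<and> \<not> affine_dependent S}"
  then show "z \<in> {tau S | S. S \<subseteq> A \<and> S \<noteq> {}}"
    by blast
qed

end
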